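(* Consider the wireless network described in the context, with nodes sending independent codewords under decode-and-forward. Run the nearest neighbor set algorithm (NNSA), which produces a finite set of candidate routes from node $1$ to node $D$. Then every candidate route that attains the largest value of $R_{\mathrm{DF}}$ among the candidates is optimal for DF, i.e., its rate equals $R_{\mathrm{DF}}^{\max}$.
   Context: Network: a finite set of nodes $\mathcal{S}=\{1,2,\dots,D\}$, $D\ge 2$. Node $1$ is the source and node $D$ is the destination. Received powers: for distinct nodes $i,t$, the power received at $t$ from $i$ is a positive real number $P_{it}$. All receivers have the same noise power $N>0$. Routes: a route is an ordered tuple of distinct nodes $\mathcal{M}=(m_1,\dots,m_L)$ with $m_1=1$ and $L\ge1$. It is a route from the source to the destination if moreover $m_L=D$. For $a\notin\mathcal{M}$, $\mathcal{M}\cup\{a\}$ denotes $(m_1,\dots,m_L,a)$. DF with independent codewords: the reception rate of node $m_t$ ($2\le t\le L$) in route $\mathcal{M}$ is $$R_{m_t}(\mathcal{M})=\tfrac12\log\Big(1+N^{-1}\sum_{i=1}^{t-1}P_{m_i m_t}\Big).$$ The supported DF rate (for $L\ge2$) is $R_{\mathrm{DF}}(\mathcal{M})=\min_{2\le t\le L}R_{m_t}(\mathcal{M})$. Also $R_{\mathrm{DF}}^{\max}=\max R_{\mathrm{DF}}(\mathcal{M})$ over all routes from $1$ to $D$. Nearest neighbor set: for a route $\mathcal{M}$ with $\mathcal{S}\setminus\mathcal{M}\neq\emptyset$, the nearest neighbor set is the smallest nonempty set $\mathcal{N}\subseteq\mathcal{S}\setminus\mathcal{M}$ with the following property. For all $n\in\mathcal{N}$,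 all $a\in\mathcal{S}\setminus(\mathcal{M}\cup\mathcal{N})$ and all $m\in\mathcal{M}$ we have $P_{mn}\ge P_{ma}$. Moreover, for every pair $(n,a)$ with $n\in\mathcal{N}$ and $a\in\mathcal{S}\setminus(\mathcal{M}\cup\mathcal{N})$, at least one of these inequalities (over $m\in\mathcal{M}$) is strict. NNSA: 1. Start with the single partial route $(1)$. 2. For a partial route $\mathcal{M}$ not containing $D$, compute its nearest neighbor set $\mathcal{N}=\{n_1,\dots,n_{|\mathcal{N}|}\}$, and replace $\mathcal{M}$ by the $|\mathcal{N}|$ routes $\mathcal{M}\cup\{n_i\}$, $i=1,\dots,|\mathcal{N}|$. 3. Repeat step 2 on every partial route until every route contains $D$; such routes end at $D$. The resulting routes are the NNSA candidates. *)

theory Defs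
  imports Complex_Main
begin

text \<open>Nodes are the natural numbers 1..D; node 1 is the source, node D the destination.
  P i t is the received power at t from i; N is the noise power.
  Routes are lists of distinct nodes starting with node 1 (list position k, 0-based,
  corresponds to index t = k+1 in the paper).\<close>

definition nodes :: "nat \<Rightarrow> nat set" where
  "nodes D = {1..D}"

definition is_route :: "nat \<Rightarrow> nat list \<Rightarrow> bool" where
  "is_route D ms \<longleftrightarrow> ms \<noteq> [] \<and> distinct ms \<and> hd ms = 1 \<and> set ms \<subseteq> nodes D"

definition is_route_SD :: "nat \<Rightarrow> nat list \<Rightarrow> bool" where
  "is_route_SD D ms \<longleftrightarrow> is_route D ms \<and> last ms = D"

definition rx_rate :: "(nat \<Rightarrow> nat \<Rightarrow> real) \<Rightarrow> real \<Rightarrow> nat list \<Rightarrow> nat \<Rightarrow> real" where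
  "rx_rate P N ms k = 1/2 * log 2 (1 + (\<Sum>i<k. P (ms ! i) (ms ! k)) / N)"

definition R_DF :: "(nat \<Rightarrow> nat \<Rightarrow> real) \<Rightarrow> real \<Rightarrow> nat list \<Rightarrow> real" where
  "R_DF P N ms = Min {rx_rate P N ms k | k. 1 \<le> k \<and> k < length ms}"

definition R_DF_max :: "nat \<Rightarrow> (nat \<Rightarrow> nat \<Rightarrow> real) \<Rightarrow> real \<Rightarrow> real" where
  "R_DF_max D P N = Max {R_DF P N ms | ms. is_route_SD D ms}"

definition NN_prop :: "nat \<Rightarrow> (nat \<Rightarrow> nat \<Rightarrow> real) \<Rightarrow> nat set \<Rightarrow> nat set \<Rightarrow> bool" where
  "NN_prop D P M Nb \<longleftrightarrow> Nb \<noteq> {} \<and> Nb \<subseteq> nodes D - M \<and>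
     (\<forall>n\<in>Nb. \<forall>a\<in>nodes D - (M \<union> Nb).
        (\<forall>m\<in>M. P m n \<ge> P m a) \<and> (\<exists>m\<in>M. P m n > P m a))"

definition NN_set :: "nat \<Rightarrow> (nat \<Rightarrow> nat \<Rightarrow> real) \<Rightarrow> nat set \<Rightarrow> nat set" where
  "NN_set D P M = (THE Nb. NN_prop D P M Nb \<and> (\<forall>Nb'. NN_prop D P M Nb' \<longrightarrow> Nb \<subseteq> Nb'))"

inductive nnsa_partial :: "nat \<Rightarrow> (nat \<Rightarrow> nat \<Rightarrow> real) \<Rightarrow> nat list \<Rightarrow> bool"
  for D :: nat and P :: "nat \<Rightarrow> nat \<Rightarrow> real" where
  start: "nnsa_partial D P [1]"
| extend: "nnsa_partial D P ms \<Longrightarrow> D \<notin> set ms \<Longrightarrow> n \<in> NN_set D P (set ms)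
             \<Longrightarrow> nnsa_partial D P (ms @ [n])"

definition nnsa_candidates :: "nat \<Rightarrow> (nat \<Rightarrow> nat \<Rightarrow> real) \<Rightarrow> nat list set" where
  "nnsa_candidates D P = {ms. nnsa_partial D P ms \<and> D \<in> set ms}"

end

theory Submission
  imports Defs
begin

(* Fix a route Q from 1 to D attaining R_DF_max (routes are finitely many).
   We grow an NNSA partial route M while keeping the invariant that every reception
   rate along M is at least R_DF(Q).  If D is not yet in M, let Q!j be the first node
   of Q outside M: all its predecessors in Q lie in M, so its reception rate in Q is
   at most log(1 + sum_{m in M} P m (Q!j) / N).  By the defining property of the
   nearest neighbour set, some n in NN_set(M) receives at least as much from every
   node of M, so appending n keeps the invariant (exchange step).  Since M grows,
   this reaches a candidate c containing D, with R_DF(c) >= R_DF(Q) = R_DF_max.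
   A best candidate is at least as good as c, and it is itself a route, so it is
   optimal. *)

text \<open>Any two sets with the nearest-neighbour property are nested: an element of
  one outside the other would have to dominate, and be strictly dominated by,
  an element of the other.\<close>
lemma NN_prop_nested:
  assumes "NN_prop D P M A" "NN_prop D P M B"
  shows "A \<subseteq> B \<or> B \<subseteq> A"
proof (rule ccontr)
  assume "\<not> (A \<subseteq> B \<or> B \<subseteq> A)"
  then obtain x y where xy: "x \<in> A" "x \<notin> B" "y \<in> B" "y \<notin> A" by blast
  have "x \<in> nodes D - (M \<union> B)" "y \<in> nodes D - (M \<union> A)"
    using assms xy unfolding NN_prop_def by auto
  then have "\<forall>m\<in>M. P m x \<ge> P m y" "\<exists>m\<in>M. P m y > P m x"
    using assms xy unfolding NN_prop_def by auto
  then show False by force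
qed

text \<open>As long as some node lies outside M, the smallest nearest-neighbour set
  exists (all candidate sets are finite and nested, and the set of all
  remaining nodes is one of them), so NN_set really has the property.\<close>
lemma NN_set_prop:
  assumes "nodes D - M \<noteq> {}"
  shows "NN_prop D P M (NN_set D P M)"
proof -
  let ?F = "{Nb. NN_prop D P M Nb}"
  have "finite ?F"
    by (rule finite_subset[of _ "Pow (nodes D)"]) (auto simp: NN_prop_def nodes_def)
  moreover have "nodes D - M \<in> ?F"
    using assms unfolding NN_prop_def by auto
  ultimately obtain S where S: "S \<in> ?F" "\<And>B. B \<in> ?F \<Longrightarrow> B \<subseteq> S \<Longrightarrow> B = S"
    using finite_has_minimal by (metis empty_iff)
  have least: "\<forall>B. NN_prop D P M B \<longrightarrow> S \<subseteq> B"
    using S NN_prop_nested by blast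
  have "NN_prop D P M (NN_set D P M) \<and> (\<forall>B. NN_prop D P M B \<longrightarrow> NN_set D P M \<subseteq> B)"
    unfolding NN_set_def by (rule theI[of _ S]) (use S least in auto)
  then show ?thesis by blast
qed

lemma NN_set_dominates:
  assumes t: "t \<in> nodes D - M"
  obtains n where "n \<in> NN_set D P M" "\<And>m. m \<in> M \<Longrightarrow> P m t \<le> P m n"
proof -
  have NN: "NN_prop D P M (NN_set D P M)"
    using NN_set_prop t by blast
  show ?thesis
  proof (cases "t \<in> NN_set D P M")
    case True
    then show ?thesis using that by blast
  next
    case False
    obtain n where "n \<in> NN_set D P M" using NN unfolding NN_prop_def by blast
    moreover have "t \<in> nodes D - (M \<union> NN_set D P M)" using False t by blast
    ultimately show ?thesis using NN that unfolding NN_prop_def by blast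
  qed
qed

lemma nnsa_partial_route:
  assumes "nnsa_partial D P ms" "D \<ge> 2"
  shows "is_route D ms \<and> (D \<in> set ms \<longrightarrow> last ms = D)"
  using assms
proof (induction rule: nnsa_partial.induct)
  case start
  then show ?case by (auto simp: is_route_def nodes_def)
next
  case (extend ms n)
  have "D \<in> nodes D - set ms" using extend by (auto simp: nodes_def)
  then have "n \<in> nodes D - set ms"
    using extend NN_set_prop unfolding NN_prop_def by blast
  then show ?case using extend by (auto simp: is_route_def)
qed

lemma nnsa_candidate_route:
  assumes "c \<in> nnsa_candidates D P" "D \<ge> 2"
  shows "is_route_SD D c"
  using assms nnsa_partial_route unfolding nnsa_candidates_def is_route_SD_def by blast

lemma rate_mono:
  assumes "N > 0" "0 \<le> a" "a \<le> b"
  shows "1/2 * log 2 (1 + a / N) \<le> 1/2 * log 2 (1 + b / N)"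
proof -
  have "a / N \<le> b / N" using assms by (simp add: divide_right_mono)
  moreover have "0 \<le> a / N" using assms by simp
  ultimately show ?thesis by simp
qed

lemma rx_power_as_set_sum:
  assumes "distinct ms" "k \<le> length ms"
  shows "(\<Sum>i<k. P (ms ! i) t) = (\<Sum>x\<in>set (take k ms). P x t)"
proof -
  have "distinct (take k ms)" using assms(1) by simp
  then have "(\<Sum>x\<in>set (take k ms). P x t) = (\<Sum>i<length (take k ms). P (take k ms ! i) t)"
    using sum.reindex_bij_betw[OF bij_betw_nth[OF _ refl refl], of "take k ms" "\<lambda>x. P x t"]
    by simp
  also have "\<dots> = (\<Sum>i<k. P (take k ms ! i) t)"
    using assms(2) by simp
  also have "\<dots> = (\<Sum>i<k. P (ms ! i) t)"
    by (intro sum.cong) auto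
  finally show ?thesis by simp
qed

lemma rx_rate_snoc_old:
  assumes "k < length ms"
  shows "rx_rate P N (ms @ [n]) k = rx_rate P N ms k"
proof -
  have "(\<Sum>i<k. P ((ms @ [n]) ! i) ((ms @ [n]) ! k)) = (\<Sum>i<k. P (ms ! i) (ms ! k))"
    using assms by (intro sum.cong) (auto simp: nth_append)
  then show ?thesis unfolding rx_rate_def by simp
qed

lemma rx_rate_snoc_new:
  assumes "distinct ms"
  shows "rx_rate P N (ms @ [n]) (length ms) = 1/2 * log 2 (1 + (\<Sum>m\<in>set ms. P m n) / N)"
proof -
  have "(\<Sum>i<length ms. P ((ms @ [n]) ! i) ((ms @ [n]) ! length ms))
      = (\<Sum>i<length ms. P (ms ! i) n)"
    by (intro sum.cong) (auto simp: nth_append)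
  also have "\<dots> = (\<Sum>m\<in>set ms. P m n)"
    using rx_power_as_set_sum[OF assms order_refl] by simp
  finally show ?thesis unfolding rx_rate_def by simp
qed

lemma R_DF_as_image:
  "{rx_rate P N ms k | k. 1 \<le> k \<and> k < length ms} = rx_rate P N ms ` {1..<length ms}"
  by auto

lemma R_DF_le_rx_rate:
  assumes "1 \<le> k" "k < length ms"
  shows "R_DF P N ms \<le> rx_rate P N ms k"
  unfolding R_DF_def R_DF_as_image using assms by (intro Min_le) auto

lemma R_DF_greatest:
  assumes "length ms \<ge> 2" "\<And>k. 1 \<le> k \<Longrightarrow> k < length ms \<Longrightarrow> r \<le> rx_rate P N ms k"
  shows "r \<le> R_DF P N ms"
proof -
  have "R_DF P N ms \<in> rx_rate P N ms ` {1..<length ms}"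
    unfolding R_DF_def R_DF_as_image using assms(1) by (intro Min_in) auto
  then show ?thesis using assms(2) by auto
qed

text \<open>Routes are distinct lists over the finite node set, so there are finitely
  many; [1, D] is one of them.  Hence R_DF_max bounds every route and is attained.\<close>
lemma finite_routes_SD: "finite {ms. is_route_SD D ms}"
proof (rule finite_subset)
  show "{ms. is_route_SD D ms} \<subseteq> {xs. set xs \<subseteq> nodes D \<and> length xs \<le> D}"
  proof
    fix xs assume "xs \<in> {ms. is_route_SD D ms}"
    then have "distinct xs" "set xs \<subseteq> nodes D"
      unfolding is_route_SD_def is_route_def by auto
    moreover have "card (set xs) \<le> card (nodes D)"
      using calculation(2) by (intro card_mono) (simp_all add: nodes_def)
    ultimately show "xs \<in> {xs. set xs \<subseteq> nodes D \<and> length xs \<le> D}"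
      by (simp add: nodes_def distinct_card)
  qed
  show "finite {xs. set xs \<subseteq> nodes D \<and> length xs \<le> D}"
    by (rule finite_lists_length_le) (simp add: nodes_def)
qed

lemma R_DF_max_as_image:
  "R_DF_max D P N = Max (R_DF P N ` {ms. is_route_SD D ms})"
  unfolding R_DF_max_def by (simp add: setcompr_eq_image)

lemma R_DF_max_bound:
  assumes "is_route_SD D ms"
  shows "R_DF P N ms \<le> R_DF_max D P N"
  unfolding R_DF_max_as_image using finite_routes_SD assms by (intro Max_ge) auto

lemma R_DF_max_attained:
  assumes "D \<ge> 2"
  obtains Q where "is_route_SD D Q" "R_DF_max D P N = R_DF P N Q"
proof -
  have "is_route_SD D [1, D]"
    using assms unfolding is_route_SD_def is_route_def nodes_def by auto
  then have "R_DF_max D P N \<in> R_DF P N ` {ms. is_route_SD D ms}"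
    unfolding R_DF_max_as_image using finite_routes_SD by (intro Max_in) auto
  then show ?thesis using that by auto
qed

lemma first_exit:
  assumes "xs \<noteq> []" "hd xs \<in> A" "last xs \<notin> A"
  obtains j where "0 < j" "j < length xs" "xs ! j \<notin> A" "set (take j xs) \<subseteq> A"
proof -
  let ?j = "length (takeWhile (\<lambda>x. x \<in> A) xs)"
  have "?j \<noteq> length xs"
  proof
    assume "?j = length xs"
    then have "takeWhile (\<lambda>x. x \<in> A) xs = xs" by (metis take_all takeWhile_eq_take order_refl)
    then show False using assms by (metis last_in_set set_takeWhileD)
  qed
  then have "?j < length xs" using length_takeWhile_le le_neq_implies_less by blast
  moreover have "xs ! ?j \<notin> A"
    using calculation by (rule nth_length_takeWhile)
  moreover have "0 < ?j"
    using assms by (cases xs) auto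
  moreover have "set (take ?j xs) \<subseteq> A"
    by (metis set_takeWhileD subsetI takeWhile_eq_take)
  ultimately show ?thesis using that by blast
qed

text \<open>Rates are measured against the rate of a fixed route; this predicate is the
  invariant maintained while the NNSA route is grown.\<close>
definition rates_above :: "(nat \<Rightarrow> nat \<Rightarrow> real) \<Rightarrow> real \<Rightarrow> real \<Rightarrow> nat list \<Rightarrow> bool" where
  "rates_above P N r ms \<longleftrightarrow> (\<forall>k. 1 \<le> k \<and> k < length ms \<longrightarrow> r \<le> rx_rate P N ms k)"

lemma exchange_step:
  assumes N: "N > 0"
    and pos: "\<And>i t. i \<in> nodes D \<Longrightarrow> t \<in> nodes D \<Longrightarrow> i \<noteq> t \<Longrightarrow> P i t > 0"
    and Q: "is_route_SD D Q"
    and M: "is_route D M" "D \<notin> set M"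
  obtains n where "n \<in> NN_set D P (set M)" "R_DF P N Q \<le> rx_rate P N (M @ [n]) (length M)"
proof -
  have Mr: "distinct M" "1 \<in> set M" "set M \<subseteq> nodes D"
    using M unfolding is_route_def by (metis hd_in_set)+
  have Qr: "distinct Q" "Q \<noteq> []" "hd Q \<in> set M" "last Q \<notin> set M" "set Q \<subseteq> nodes D"
    using Q M(2) Mr(2) unfolding is_route_SD_def is_route_def by auto
  obtain j where j: "0 < j" "j < length Q" "Q ! j \<notin> set M" "set (take j Q) \<subseteq> set M"
    using first_exit[OF Qr(2-4)] .
  let ?t = "Q ! j"
  have t: "?t \<in> nodes D - set M" using j Qr(5) by auto
  obtain n where n: "n \<in> NN_set D P (set M)" "\<And>m. m \<in> set M \<Longrightarrow> P m ?t \<le> P m n"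
    using NN_set_dominates[OF t, of P] by blast
  have nonneg: "\<And>m. m \<in> set M \<Longrightarrow> 0 \<le> P m ?t"
    using pos Mr(3) t by (metis DiffD1 DiffD2 less_imp_le subsetD)
  (* the predecessors of Q!j in Q all lie on M, and n dominates Q!j from M *)
  have "(\<Sum>x\<in>set (take j Q). P x ?t) \<le> (\<Sum>m\<in>set M. P m ?t)"
    using j(4) nonneg by (intro sum_mono2) auto
  also have "\<dots> \<le> (\<Sum>m\<in>set M. P m n)"
    using n(2) by (rule sum_mono)
  finally have "1/2 * log 2 (1 + (\<Sum>x\<in>set (take j Q). P x ?t) / N)
      \<le> rx_rate P N (M @ [n]) (length M)"
    unfolding rx_rate_snoc_new[OF Mr(1)]
    using j(4) nonneg by (intro rate_mono[OF N] sum_nonneg) auto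
  then have "rx_rate P N Q j \<le> rx_rate P N (M @ [n]) (length M)"
    unfolding rx_rate_def rx_power_as_set_sum[OF Qr(1) less_imp_le[OF j(2)]] .
  moreover have "R_DF P N Q \<le> rx_rate P N Q j"
    using j by (intro R_DF_le_rx_rate) auto
  ultimately show ?thesis using that n(1) by fastforce
qed

lemma candidate_above:
  assumes D2: "D \<ge> 2" and N: "N > 0"
    and pos: "\<And>i t. i \<in> nodes D \<Longrightarrow> t \<in> nodes D \<Longrightarrow> i \<noteq> t \<Longrightarrow> P i t > 0"
    and Q: "is_route_SD D Q"
  shows "nnsa_partial D P M \<Longrightarrow> rates_above P N (R_DF P N Q) M
    \<Longrightarrow> \<exists>c\<in>nnsa_candidates D P. rates_above P N (R_DF P N Q) c"
proof (induction "card (nodes D - set M)" arbitrary: M rule: less_induct)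
  case (less M)
  show ?case
  proof (cases "D \<in> set M")
    case True
    then show ?thesis using less.prems unfolding nnsa_candidates_def by blast
  next
    case False
    have route: "is_route D M" using nnsa_partial_route[OF less.prems(1) D2] by blast
    obtain n where n: "n \<in> NN_set D P (set M)" "R_DF P N Q \<le> rx_rate P N (M @ [n]) (length M)"
      using exchange_step[OF N pos Q route False] .
    have "D \<in> nodes D - set M" using False D2 by (auto simp: nodes_def)
    then have new: "n \<in> nodes D - set M"
      using n(1) NN_set_prop unfolding NN_prop_def by blast
    have part: "nnsa_partial D P (M @ [n])"
      using less.prems(1) False n(1) by (rule nnsa_partial.extend)
    have inv: "rates_above P N (R_DF P N Q) (M @ [n])"
      using less.prems(2) n(2) rx_rate_snoc_old
      unfolding rates_above_def by (metis le_antisym length_append_singleton less_Suc_eq)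
    have "nodes D - set (M @ [n]) = (nodes D - set M) - {n}" by auto
    then have "card (nodes D - set (M @ [n])) < card (nodes D - set M)"
      using card_Diff1_less[OF _ new] by (simp add: nodes_def)
    then show ?thesis using less.hyps part inv by blast
  qed
qed

theorem theorem2:
  fixes D :: nat and P :: "nat \<Rightarrow> nat \<Rightarrow> real" and N :: real and ms :: "nat list"
  assumes "D \<ge> 2"
    and "N > 0"
    and "\<And>i t. i \<in> nodes D \<Longrightarrow> t \<in> nodes D \<Longrightarrow> i \<noteq> t \<Longrightarrow> P i t > 0"
    and "ms \<in> nnsa_candidates D P"
    and "\<And>ms'. ms' \<in> nnsa_candidates D P \<Longrightarrow> R_DF P N ms' \<le> R_DF P N ms"
  shows "R_DF P N ms = R_DF_max D P N"
proof -
  obtain Q where Q: "is_route_SD D Q" "R_DF_max D P N = R_DF P N Q"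
    using R_DF_max_attained[OF assms(1)] .
  have "rates_above P N (R_DF P N Q) [1]"
    unfolding rates_above_def by simp
  then obtain c where c: "c \<in> nnsa_candidates D P" "rates_above P N (R_DF P N Q) c"
    using candidate_above[of D N P Q "[1]"] assms(1-3) Q(1) nnsa_partial.start by blast
  have "is_route_SD D c" using nnsa_candidate_route[OF c(1) assms(1)] .
  then have "length c \<ge> 2"
    using assms(1) by (cases c) (auto simp: is_route_SD_def is_route_def Suc_le_eq split: if_splits)
  then have "R_DF P N Q \<le> R_DF P N c"
    using c(2) unfolding rates_above_def by (intro R_DF_greatest) auto
  also have "\<dots> \<le> R_DF P N ms" using assms(5) c(1) .
  finally have "R_DF_max D P N \<le> R_DF P N ms" using Q(2) by simp
  moreover have "R_DF P N ms \<le> R_DF_max D P N"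
    using R_DF_max_bound nnsa_candidate_route[OF assms(4,1)] .
  ultimately show ?thesis by linarith
qed

end
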